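(* For each $i=1,\dots,d$, every $\mathbf F_i$-supermartingale is also an $\mathbf F^i$-supermartingale.
   Context: $(\Omega,\mathcal F,\mathbb P)$ is complete and $\{\mathcal F(\tilde s)\}_{\tilde s\in\mathbb N_0^d}$ satisfies (F1) $\mathcal F(\tilde s)\subseteq\mathcal F(\tilde r)$ for $\tilde s\le\tilde r$ componentwise; (F2) $\mathcal F(\tilde 0)$ contains all null sets; (F4) for all $\tilde s,\tilde r$, $\mathcal F(\tilde s)$ and $\mathcal F(\tilde r)$ are conditionally independent given $\mathcal F(\tilde s\wedge\tilde r)$ ($\wedge$ componentwise minimum). With $\tilde e_i$ the $i$th unit vector: $\mathcal F_i(t):=\mathcal F(t\tilde e_i)$, $\mathbf F_i=\{\mathcal F_i(t)\}_{t\in\mathbb N_0}$; $\mathcal F^i(t):=\sigma\big(\bigcup_{\tilde r\in\mathbb N_0^d:\,r_i\le t}\mathcal F(\tilde r)\big)$, $\mathbf F^i=\{\mathcal F^i(t)\}_{t\in\mathbb N_0}$. *)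

theory Defs
  imports "HOL-Probability.Probability"
begin

text \<open>Multi-indices in N_0^d are functions 'd \<Rightarrow> nat over a finite index type 'd
(d = CARD('d)); the order and the minimum are the componentwise ones (le_fun, inf).\<close>

definition cond_indep :: "'a measure \<Rightarrow> 'a measure \<Rightarrow> 'a measure \<Rightarrow> 'a measure \<Rightarrow> bool" where
  "cond_indep M G F H \<longleftrightarrow>
     (\<forall>A\<in>sets F. \<forall>B\<in>sets H.
        AE x in M. real_cond_exp M G (indicator (A \<inter> B)) x
                   = real_cond_exp M G (indicator A) x * real_cond_exp M G (indicator B) x)"

text \<open>Conditions (F1), (F2), (F4) on a multiparameter filtration, together with the
standing requirement that each F(r) is a sub-sigma-algebra of M.\<close>
definition multi_filtration :: "'a measure \<Rightarrow> (('d::finite \<Rightarrow> nat) \<Rightarrow> 'a measure) \<Rightarrow> bool" where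
  "multi_filtration M F \<longleftrightarrow>
     (\<forall>r. subalgebra M (F r)) \<and>
     (\<forall>s r. s \<le> r \<longrightarrow> sets (F s) \<subseteq> sets (F r)) \<and>
     null_sets M \<subseteq> sets (F (\<lambda>_. 0)) \<and>
     (\<forall>s r. cond_indep M (F (inf s r)) (F s) (F r))"

definition axis_filt :: "(('d \<Rightarrow> nat) \<Rightarrow> 'a measure) \<Rightarrow> 'd \<Rightarrow> nat \<Rightarrow> 'a measure" where
  "axis_filt F i t = F (\<lambda>j. if j = i then t else 0)"

definition slab_filt :: "'a measure \<Rightarrow> (('d \<Rightarrow> nat) \<Rightarrow> 'a measure) \<Rightarrow> 'd \<Rightarrow> nat \<Rightarrow> 'a measure" where
  "slab_filt M F i t = sigma (space M) (\<Union>r\<in>{r. r i \<le> t}. sets (F r))"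

definition supermartingale :: "'a measure \<Rightarrow> (nat \<Rightarrow> 'a measure) \<Rightarrow> (nat \<Rightarrow> 'a \<Rightarrow> real) \<Rightarrow> bool" where
  "supermartingale M G X \<longleftrightarrow>
     (\<forall>t. X t \<in> borel_measurable (G t)) \<and>
     (\<forall>t. integrable M (X t)) \<and>
     (\<forall>s t. s \<le> t \<longrightarrow> (AE x in M. real_cond_exp M (G s) (X t) x \<le> X s x))"

end

theory Submission
  imports Defs
begin

text \<open>
  Fix \<open>s \<le> t\<close> and an integrable, \<open>F(t e\<^sub>i)\<close>-measurable \<open>Y\<close>. The \<open>\<sigma>\<close>-algebra \<open>F\<^sup>i(s)\<close>
  is generated by the \<open>\<inter>\<close>-stable family of events \<open>B \<in> F(r)\<close> with \<open>r\<^sub>i \<le> s\<close>, and raising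
  \<open>r\<^sub>i\<close> to \<open>s\<close> we may assume \<open>r\<^sub>i = s\<close>, so that \<open>r \<sqinter> t e\<^sub>i = s e\<^sub>i\<close>. By (F4), \<open>F(r)\<close> and
  \<open>F(t e\<^sub>i)\<close> are then conditionally independent given \<open>F(s e\<^sub>i)\<close>, so
  \<open>E[1\<^sub>B | F(t e\<^sub>i)] = E[1\<^sub>B | F(s e\<^sub>i)]\<close> and therefore \<open>\<integral>\<^sub>B Y = \<integral>\<^sub>B E[Y | F(s e\<^sub>i)]\<close>. By Dynkin's
  lemma this extends to all \<open>B \<in> F\<^sup>i(s)\<close>, hence \<open>E[Y | F\<^sup>i(s)] = E[Y | F\<^sub>i(s)]\<close> almost surely,
  and the supermartingale inequality for \<open>F\<^sub>i\<close> transfers to \<open>F\<^sup>i\<close>.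
\<close>

lemma (in prob_space) sigma_finite_subalgebraI:
  assumes "subalgebra M N"
  shows "sigma_finite_subalgebra M N"
proof -
  interpret finite_measure_subalgebra M N
    by unfold_locales fact
  show ?thesis ..
qed

lemma set_integral_Diff_space:
  fixes f :: "'a \<Rightarrow> real"
  assumes "integrable M f" and "A \<in> sets M"
  shows "(\<integral>x\<in>space M - A. f x \<partial>M) = (\<integral>x. f x \<partial>M) - (\<integral>x\<in>A. f x \<partial>M)"
proof -
  have "set_integrable M B f" if "B \<in> sets M" for B
    using integrable_mult_indicator[OF that assms(1)] by (simp add: set_integrable_def)
  then have "(\<integral>x\<in>(space M - A) \<union> A. f x \<partial>M) = (\<integral>x\<in>space M - A. f x \<partial>M) + (\<integral>x\<in>A. f x \<partial>M)"
    using assms(2) by (intro set_integral_Un) auto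
  moreover have "(space M - A) \<union> A = space M"
    using sets.sets_into_space[OF assms(2)] by blast
  ultimately show ?thesis
    using set_integral_space[OF assms(1)] by simp
qed

lemma set_integral_eq_sigma_sets:
  fixes f g :: "'a \<Rightarrow> real"
  assumes f: "integrable M f" and g: "integrable M g"
    and E: "Int_stable E" "E \<subseteq> Pow (space M)" "sigma_sets (space M) E \<subseteq> sets M"
    and eq_E: "\<And>A. A \<in> E \<Longrightarrow> (\<integral>x\<in>A. f x \<partial>M) = (\<integral>x\<in>A. g x \<partial>M)"
    and eq_space: "(\<integral>x. f x \<partial>M) = (\<integral>x. g x \<partial>M)"
    and A: "A \<in> sigma_sets (space M) E"
  shows "(\<integral>x\<in>A. f x \<partial>M) = (\<integral>x\<in>A. g x \<partial>M)"
  using E(1,2) A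
proof (induction rule: sigma_sets_induct_disjoint)
  case (basic A)
  then show ?case by (rule eq_E)
next
  case empty
  then show ?case by (simp add: set_lebesgue_integral_def)
next
  case (compl A)
  with E(3) have "A \<in> sets M" by blast
  with compl.IH show ?case
    using f g eq_space by (simp add: set_integral_Diff_space)
next
  case (union A)
  with E(3) have A: "\<And>i. A i \<in> sets M"
    by blast
  from union have disj: "\<And>i j. i \<noteq> j \<Longrightarrow> A i \<inter> A j = {}"
    by (simp add: disjoint_family_on_def)
  have "set_integrable M (\<Union>i. A i) h" if "integrable M h" for h :: "'a \<Rightarrow> real"
    using integrable_mult_indicator[OF _ that] A by (simp add: set_integrable_def sets.countable_UN)
  then show ?case
    using f g union.IH by (simp add: lebesgue_integral_countable_add[OF A disj])
qed

lemma (in sigma_finite_subalgebra) real_cond_exp_charact_Int_stable: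
  assumes E: "sets F = sigma_sets (space M) E" "Int_stable E" "E \<subseteq> Pow (space M)"
    and eq_E: "\<And>A. A \<in> E \<Longrightarrow> (\<integral>x\<in>A. f x \<partial>M) = (\<integral>x\<in>A. g x \<partial>M)"
    and eq_space: "(\<integral>x. f x \<partial>M) = (\<integral>x. g x \<partial>M)"
    and f: "integrable M f" and g: "integrable M g" "g \<in> borel_measurable F"
  shows "AE x in M. real_cond_exp M F f x = g x"
proof (rule real_cond_exp_charact[OF _ f g])
  have "sigma_sets (space M) E \<subseteq> sets M"
    using subalg E(1) by (simp add: subalgebra_def)
  then show "(\<integral>x\<in>A. f x \<partial>M) = (\<integral>x\<in>A. g x \<partial>M)" if "A \<in> sets F" for A
    using set_integral_eq_sigma_sets[OF f g(1) E(2,3) _ eq_E eq_space] that E(1) by blast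
qed

lemma (in prob_space) real_cond_exp_indicator_cond_indep:
  assumes H: "subalgebra M H" and G: "subalgebra H G" and R: "subalgebra M R"
    and indep: "cond_indep M G R H" and A: "A \<in> sets R"
  shows "AE x in M. real_cond_exp M H (indicator A) x = real_cond_exp M G (indicator A) x"
proof -
  have "subalgebra M G"
    using H G by (auto simp: subalgebra_def)
  then interpret G: sigma_finite_subalgebra M G
    by (rule sigma_finite_subalgebraI)
  interpret H: sigma_finite_subalgebra M H
    using H by (rule sigma_finite_subalgebraI)
  let ?eA = "real_cond_exp M G (indicator A)"
  have A_M: "A \<in> sets M"
    using A R by (auto simp: subalgebra_def)
  have int_indicator: "integrable M (indicator C :: 'a \<Rightarrow> real)" if "C \<in> sets M" for C
    using that by (intro integrable_real_indicator) (simp_all add: less_top[symmetric])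
  note int_A = int_indicator[OF A_M]
  show ?thesis
  proof (rule H.real_cond_exp_charact[OF _ int_A G.real_cond_exp_int(1)[OF int_A]])
    show "?eA \<in> borel_measurable H"
      using G borel_measurable_cond_exp by (rule measurable_from_subalg)
  next
    fix B assume B: "B \<in> sets H"
    then have B_M: "B \<in> sets M"
      using H by (auto simp: subalgebra_def)
    have "(\<integral>x\<in>B. indicator A x \<partial>M) = (\<integral>x. indicator (A \<inter> B) x \<partial>M)"
      unfolding set_lebesgue_integral_def
      by (rule Bochner_Integration.integral_cong) (auto simp: indicator_def)
    also have "\<dots> = (\<integral>x. real_cond_exp M G (indicator (A \<inter> B)) x \<partial>M)"
      using A_M B_M by (simp add: G.real_cond_exp_int(2) int_indicator)
    also have "\<dots> = (\<integral>x. ?eA x * real_cond_exp M G (indicator B) x \<partial>M)"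
      using indep A B unfolding cond_indep_def by (intro integral_cong_AE) auto
    also have "\<dots> = (\<integral>x. ?eA x * indicator B x \<partial>M)"
      using integrable_real_mult_indicator[OF B_M G.real_cond_exp_int(1)[OF int_A]] B_M
      by (intro G.real_cond_exp_intg(2)) (auto simp: mult.commute)
    also have "\<dots> = (\<integral>x\<in>B. ?eA x \<partial>M)"
      by (simp add: set_lebesgue_integral_def mult.commute)
    finally show "(\<integral>x\<in>B. indicator A x \<partial>M) = (\<integral>x\<in>B. ?eA x \<partial>M)" .
  qed
qed

lemma (in prob_space) set_integral_real_cond_exp_cond_indep:
  assumes H: "subalgebra M H" and G: "subalgebra H G" and R: "subalgebra M R"
    and indep: "cond_indep M G R H" and A: "A \<in> sets R"
    and f: "integrable M f" "f \<in> borel_measurable H"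
  shows "(\<integral>x\<in>A. f x \<partial>M) = (\<integral>x\<in>A. real_cond_exp M G f x \<partial>M)"
proof -
  have "subalgebra M G"
    using H G by (auto simp: subalgebra_def)
  then interpret G: sigma_finite_subalgebra M G
    by (rule sigma_finite_subalgebraI)
  interpret H: sigma_finite_subalgebra M H
    using H by (rule sigma_finite_subalgebraI)
  let ?eA = "real_cond_exp M G (indicator A)"
  have A_M: "A \<in> sets M"
    using A R by (auto simp: subalgebra_def)
  have f_M: "f \<in> borel_measurable M"
    using H f(2) by (rule measurable_from_subalg)
  have eA_G: "?eA \<in> borel_measurable G"
    by (rule borel_measurable_cond_exp)
  have int_fA: "integrable M (\<lambda>x. f x * indicator A x)"
    using integrable_real_mult_indicator[OF A_M f(1)] by (simp add: mult.commute)
  have eq_eA: "AE x in M. f x * real_cond_exp M H (indicator A) x = ?eA x * f x"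
    using real_cond_exp_indicator_cond_indep[OF H G R indep A] by auto
  have "integrable M (\<lambda>x. f x * real_cond_exp M H (indicator A) x)"
    using H.real_cond_exp_intg(1)[OF int_fA f(2)] A_M by simp
  then have int_eA_f: "integrable M (\<lambda>x. ?eA x * f x)"
    by (rule integrable_cong_AE_imp[OF _ _ eq_eA])
      (use f_M measurable_from_subalg[OF G.subalg eA_G] in measurable)
  have int_ef_A: "integrable M (\<lambda>x. real_cond_exp M G f x * indicator A x)"
    using integrable_real_mult_indicator[OF A_M G.real_cond_exp_int(1)[OF f(1)]]
    by (simp add: mult.commute)
  have "(\<integral>x\<in>A. f x \<partial>M) = (\<integral>x. f x * indicator A x \<partial>M)"
    by (simp add: set_lebesgue_integral_def mult.commute)
  also have "\<dots> = (\<integral>x. f x * real_cond_exp M H (indicator A) x \<partial>M)"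
    using H.real_cond_exp_intg(2)[OF int_fA f(2)] A_M by simp
  also have "\<dots> = (\<integral>x. ?eA x * f x \<partial>M)"
    using eq_eA by (rule integral_cong_AE[rotated 2]) (use f_M in measurable)
  also have "\<dots> = (\<integral>x. ?eA x * real_cond_exp M G f x \<partial>M)"
    using G.real_cond_exp_intg(2)[OF int_eA_f eA_G f_M] by simp
  also have "\<dots> = (\<integral>x. real_cond_exp M G f x * indicator A x \<partial>M)"
    using G.real_cond_exp_intg(2)[OF int_ef_A borel_measurable_cond_exp] A_M
    by (simp add: mult.commute)
  also have "\<dots> = (\<integral>x\<in>A. real_cond_exp M G f x \<partial>M)"
    by (simp add: set_lebesgue_integral_def mult.commute)
  finally show ?thesis .
qed

lemma space_slab_filt [simp]: "space (slab_filt M F i t) = space M"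
  by (simp add: slab_filt_def space_measure_of_conv)

lemma sets_slab_filt:
  assumes "\<And>r. subalgebra M (F r)"
  shows "sets (slab_filt M F i t) = sigma_sets (space M) (\<Union>r\<in>{r. r i \<le> t}. sets (F r))"
  unfolding slab_filt_def
  using assms sets.sets_into_space by (intro sets_measure_of) (fastforce simp: subalgebra_def)

lemma subalgebra_slab_filt:
  assumes "\<And>r. subalgebra M (F r)"
  shows "subalgebra M (slab_filt M F i t)"
  unfolding subalgebra_def sets_slab_filt[OF assms]
  using assms by (auto intro!: sets.sigma_sets_subset simp: subalgebra_def)

lemma subalgebra_slab_filt_axis_filt:
  assumes "\<And>r. subalgebra M (F r)"
  shows "subalgebra (slab_filt M F i t) (axis_filt F i t)"
proof -
  have "sets (axis_filt F i t) \<subseteq> (\<Union>r\<in>{r. r i \<le> t}. sets (F r))"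
    unfolding axis_filt_def by (rule UN_upper) simp
  then show ?thesis
    using assms unfolding subalgebra_def sets_slab_filt[OF assms]
    by (auto simp: axis_filt_def)
qed

lemma Int_stable_slab_generator:
  fixes F :: "('d \<Rightarrow> nat) \<Rightarrow> 'a measure"
  assumes mono: "\<And>s r. s \<le> r \<Longrightarrow> sets (F s) \<subseteq> sets (F r)"
  shows "Int_stable (\<Union>r\<in>{r. r i \<le> t}. sets (F r))"
proof (rule Int_stableI)
  fix a b assume "a \<in> (\<Union>r\<in>{r. r i \<le> t}. sets (F r))" "b \<in> (\<Union>r\<in>{r. r i \<le> t}. sets (F r))"
  then obtain r q where "r i \<le> t" "a \<in> sets (F r)" "q i \<le> t" "b \<in> sets (F q)"
    by auto
  moreover from this have "a \<inter> b \<in> sets (F (sup r q))"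
    using mono[of r "sup r q"] mono[of q "sup r q"] by auto
  ultimately show "a \<inter> b \<in> (\<Union>r\<in>{r. r i \<le> t}. sets (F r))"
    by (intro UN_I[of "sup r q"]) auto
qed

lemma multi_filtration_cond_indep_axis_filt:
  assumes "multi_filtration M F" and "r i = s" and "s \<le> t"
  shows "cond_indep M (axis_filt F i s) (F r) (axis_filt F i t)"
proof -
  have "inf r (\<lambda>j. if j = i then t else 0) = (\<lambda>j. if j = i then s else 0)"
    using assms(2,3) by (auto simp: fun_eq_iff inf_nat_def)
  then show ?thesis
    using assms(1) unfolding multi_filtration_def axis_filt_def by metis
qed

lemma real_cond_exp_slab_filt_eq_axis_filt:
  assumes "prob_space M" and filt: "multi_filtration M F" and "s \<le> t"
    and Y: "integrable M Y" "Y \<in> borel_measurable (axis_filt F i t)"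
  shows "AE x in M. real_cond_exp M (slab_filt M F i s) Y x = real_cond_exp M (axis_filt F i s) Y x"
proof -
  interpret prob_space M by fact
  have sub: "\<And>r. subalgebra M (F r)" and mono: "\<And>q r. q \<le> r \<Longrightarrow> sets (F q) \<subseteq> sets (F r)"
    using filt unfolding multi_filtration_def by auto
  interpret S: sigma_finite_subalgebra M "slab_filt M F i s"
    using subalgebra_slab_filt[OF sub] by (rule sigma_finite_subalgebraI)
  interpret A: sigma_finite_subalgebra M "axis_filt F i s"
    using sub by (intro sigma_finite_subalgebraI) (simp add: axis_filt_def)
  have axis_t: "subalgebra M (axis_filt F i t)"
    using sub by (simp add: axis_filt_def)
  have axis_s_t: "subalgebra (axis_filt F i t) (axis_filt F i s)"
    using sub mono[of "\<lambda>j. if j = i then s else 0" "\<lambda>j. if j = i then t else 0"] \<open>s \<le> t\<close>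
    by (auto simp: axis_filt_def subalgebra_def le_fun_def)
  show ?thesis
  proof (rule S.real_cond_exp_charact_Int_stable[OF sets_slab_filt[OF sub]
        Int_stable_slab_generator[OF mono] _ _ _ Y(1) A.real_cond_exp_int(1)[OF Y(1)]])
    show "(\<Union>r\<in>{r. r i \<le> s}. sets (F r)) \<subseteq> Pow (space M)"
      using sub sets.sets_into_space by (fastforce simp: subalgebra_def)
  next
    fix B assume "B \<in> (\<Union>r\<in>{r. r i \<le> s}. sets (F r))"
    then obtain r where "r i \<le> s" "B \<in> sets (F r)"
      by auto
    moreover have "r \<le> r(i := s)"
      using \<open>r i \<le> s\<close> by (simp add: le_fun_def)
    ultimately have B: "B \<in> sets (F (r(i := s)))"
      using mono by blast
    show "(\<integral>x\<in>B. Y x \<partial>M) = (\<integral>x\<in>B. real_cond_exp M (axis_filt F i s) Y x \<partial>M)"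
      using multi_filtration_cond_indep_axis_filt[OF filt _ \<open>s \<le> t\<close>, of "r(i := s)"] B Y
      by (intro set_integral_real_cond_exp_cond_indep[OF axis_t axis_s_t sub]) auto
  next
    show "(\<integral>x. Y x \<partial>M) = (\<integral>x. real_cond_exp M (axis_filt F i s) Y x \<partial>M)"
      using A.real_cond_exp_int(2)[OF Y(1)] by simp
  next
    show "real_cond_exp M (axis_filt F i s) Y \<in> borel_measurable (slab_filt M F i s)"
      using subalgebra_slab_filt_axis_filt[OF sub] borel_measurable_cond_exp
      by (rule measurable_from_subalg)
  qed
qed

theorem proposition6p4:
  fixes M :: "'a measure" and F :: "('d::finite \<Rightarrow> nat) \<Rightarrow> 'a measure"
  assumes "prob_space M"
    and "complete_measure M"
    and "multi_filtration M F"
  shows "\<forall>i X. supermartingale M (axis_filt F i) X \<longrightarrow> supermartingale M (slab_filt M F i) X"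
proof (intro allI impI)
  fix i X
  assume X: "supermartingale M (axis_filt F i) X"
  have sub: "\<And>r. subalgebra M (F r)"
    using assms(3) by (simp add: multi_filtration_def)
  show "supermartingale M (slab_filt M F i) X"
    unfolding supermartingale_def
  proof (intro conjI allI impI)
    fix t
    have "X t \<in> borel_measurable (axis_filt F i t)"
      using X by (simp add: supermartingale_def)
    with subalgebra_slab_filt_axis_filt[OF sub]
    show "X t \<in> borel_measurable (slab_filt M F i t)"
      by (rule measurable_from_subalg)
  next
    show "integrable M (X t)" for t
      using X by (simp add: supermartingale_def)
    fix s t :: nat
    assume "s \<le> t"
    with X have "AE x in M. real_cond_exp M (slab_filt M F i s) (X t) x
                            = real_cond_exp M (axis_filt F i s) (X t) x"
      by (intro real_cond_exp_slab_filt_eq_axis_filt[OF assms(1,3)]) (auto simp: supermartingale_def)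
    moreover have "AE x in M. real_cond_exp M (axis_filt F i s) (X t) x \<le> X s x"
      using X \<open>s \<le> t\<close> by (simp add: supermartingale_def)
    ultimately show "AE x in M. real_cond_exp M (slab_filt M F i s) (X t) x \<le> X s x"
      by eventually_elim simp
  qed
qed

end
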